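(* Let $g\in\mathrm{SL}_d(\mathbb{R})$ and $\mathcal{P}=\mathrm{span}_\mathbb{R}\{ge_1,\dots,ge_{d-1}\}$. Then: (1) Under the identification $X_{d-1,d}=\mathrm{SL}_d(\mathbb{R})/Q$, the subset $X_\mathcal{P}$ equals $gP/Q=\{gpQ:p\in P\}$. (2) The map $\varphi_g:\mathrm{PGL}_{d-1}(\mathbb{R})/\mathrm{PGL}_{d-1}(\mathbb{Z})\to X_\mathcal{P}$, $\mathbb{R}^\times m\,\mathrm{PGL}_{d-1}(\mathbb{Z})\mapsto g\begin{pmatrix}m&0\\0&1/\det m\end{pmatrix}Q$ ($m\in\mathrm{GL}_{d-1}(\mathbb{R})$), is a homeomorphism. (3) If $g'\in\mathrm{SL}_d(\mathbb{R})$ satisfies $gP=g'P$, then $(\varphi_g)_*\mu_{X_{d-1}}=(\varphi_{g'})_*\mu_{X_{d-1}}$, where $\mu_{X_{d-1}}$ is the $\mathrm{PGL}_{d-1}(\mathbb{R})$-invariant probability measure on $\mathrm{PGL}_{d-1}(\mathbb{R})/\mathrm{PGL}_{d-1}(\mathbb{Z})$.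
   Context: $X_{d-1,d}$ is the space of homothety classes $[\Lambda]=\{\alpha\Lambda:\alpha\in\mathbb{R}^\times\}$ of rank-$(d-1)$ discrete subgroups $\Lambda$ of $\mathbb{R}^d$, identified with $\mathrm{SL}_d(\mathbb{R})/Q$ via $gQ\mapsto[g\,\mathrm{span}_\mathbb{Z}\{e_1,\dots,e_{d-1}\}]$, where $Q=\{\begin{pmatrix}\lambda\gamma&*\\0&1/\det(\lambda\gamma)\end{pmatrix}:\lambda\in\mathbb{R}^\times,\gamma\in\mathrm{GL}_{d-1}(\mathbb{Z})\}$. $P=\{\begin{pmatrix}m&*\\0&1/\det m\end{pmatrix}:m\in\mathrm{GL}_{d-1}(\mathbb{R})\}$. For a hyperplane $\mathcal{P}$, $X_\mathcal{P}=\{[\Lambda]\in X_{d-1,d}:\Lambda\subseteq\mathcal{P}\}$. *)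

theory Defs
  imports "HOL-Probability.Probability"
begin

text \<open>The dimension d is CARD('m) + 1: we index coordinates of R^d by the
type 'm + unit, where Inl i (i :: 'm) are the first d-1 coordinates and Inr () is the
last one. A quotient G/H is represented as the set of left cosets
g H (subsets of matrices), topologised with the quotient topology of G.\<close>

type_synonym 'm mat1 = "real^'m^'m"
type_synonym 'm matd = "real^('m + unit)^('m + unit)"

abbreviation GLR :: "(real^'a^'a::finite) set" where
  "GLR \<equiv> {A. det A \<noteq> 0}"

definition SL :: "(real^'a^'a::finite) set" where
  "SL = {A. det A = 1}"

text \<open>GL_{d-1}(Z): integer matrices with integer inverse, i.e. integer entries and det = +-1.\<close>
definition GLZ :: "(real^'a^'a::finite) set" where
  "GLZ = {A. (\<forall>i j. A $ i $ j \<in> \<int>) \<and> invertible A \<and> (\<forall>i j. matrix_inv A $ i $ j \<in> \<int>)}"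

definition ulblock :: "'m::finite matd \<Rightarrow> 'm mat1" where
  "ulblock A = (\<chi> i j. A $ Inl i $ Inl j)"

definition blockdiag :: "'m::finite mat1 \<Rightarrow> 'm matd" where
  "blockdiag m = (\<chi> i j. case (i, j) of
       (Inl a, Inl b) \<Rightarrow> m $ a $ b
     | (Inr _, Inr _) \<Rightarrow> 1 / det m
     | _ \<Rightarrow> 0)"

definition Pgrp :: "'m::finite matd set" where
  "Pgrp = {A. det (ulblock A) \<noteq> 0 \<and> (\<forall>j. A $ Inr () $ Inl j = 0)
               \<and> A $ Inr () $ Inr () = 1 / det (ulblock A)}"

definition Qgrp :: "'m::finite matd set" where
  "Qgrp = {A. (\<exists>l \<gamma>. l \<noteq> 0 \<and> \<gamma> \<in> GLZ \<and> ulblock A = l *\<^sub>R \<gamma>)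
               \<and> (\<forall>j. A $ Inr () $ Inl j = 0)
               \<and> A $ Inr () $ Inr () = 1 / det (ulblock A)}"

text \<open>R^x GL_{d-1}(Z) inside GL_{d-1}(R): the preimage of PGL_{d-1}(Z) in GL_{d-1}(R).\<close>
definition Hgrp :: "(real^'a^'a::finite) set" where
  "Hgrp = {l *\<^sub>R \<gamma> | l \<gamma>. l \<noteq> 0 \<and> \<gamma> \<in> GLZ}"

definition lcoset :: "real^'a^'a::finite \<Rightarrow> (real^'a^'a) set \<Rightarrow> (real^'a^'a) set" where
  "lcoset g H = (\<lambda>h. g ** h) ` H"

definition quot_top :: "'a topology \<Rightarrow> ('a \<Rightarrow> 'b) \<Rightarrow> 'b topology" where
  "quot_top X f = topology (\<lambda>U. U \<subseteq> f ` topspace X \<and> openin X {x \<in> topspace X. f x \<in> U})"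

text \<open>X_{d-1} = PGL_{d-1}(R)/PGL_{d-1}(Z), realised as GL_{d-1}(R)/(R^x GL_{d-1}(Z)):
the coset R^x m PGL_{d-1}(Z) corresponds to the set m (R^x GL_{d-1}(Z)).\<close>
definition Xlow :: "(real^'a^'a::finite) set topology" where
  "Xlow = quot_top (subtopology euclidean GLR) (\<lambda>m. lcoset m Hgrp)"

definition Xdd :: "'m::finite matd set topology" where
  "Xdd = quot_top (subtopology euclidean SL) (\<lambda>g. lcoset g Qgrp)"

definition Lambda0 :: "(real^('m::finite + unit)) set" where
  "Lambda0 = {(\<Sum>i\<in>UNIV. real_of_int (c i) *\<^sub>R axis (Inl i) 1) | c. True}"

definition hclass :: "('a::real_vector) set \<Rightarrow> 'a set set" where
  "hclass L = {(\<lambda>v. \<alpha> *\<^sub>R v) ` L | \<alpha>. \<alpha> \<noteq> 0}"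

definition ident :: "'m::finite matd set \<Rightarrow> (real^('m + unit)) set set" where
  "ident c = hclass ((\<lambda>v. (SOME g. g \<in> c) *v v) ` Lambda0)"

text \<open>X_P, viewed inside SL_d(R)/Q via the identification: cosets whose lattice class
consists of subgroups contained in the hyperplane P.\<close>
definition XP :: "(real^('m::finite + unit)) set \<Rightarrow> 'm matd set set" where
  "XP Hyp = {c \<in> topspace Xdd. \<forall>L \<in> ident c. L \<subseteq> Hyp}"

definition phi :: "'m::finite matd \<Rightarrow> 'm mat1 set \<Rightarrow> 'm matd set" where
  "phi g c = lcoset (g ** blockdiag (SOME m. m \<in> c)) Qgrp"

definition borel_of_top :: "'a topology \<Rightarrow> 'a measure" where
  "borel_of_top X = sigma (topspace X) {U. openin X U}"

end

(* A coset hQ (h in SL_d(R)) lies in X_P exactly when h maps the lattice Z e_1 + ... + Z e_(d-1),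
   and hence the coordinate hyperplane it spans, into P = g(coordinate hyperplane).  This says that
   g^-1 h is block upper triangular, i.e. that h lies in gP.  On gP/Q the map phi_g has the explicit
   inverse gpQ |-> (upper left block of p) R^x GL_(d-1)(Z).  Both maps are induced by continuous
   matrix maps that are constant on cosets; for the inverse this is h |-> upper left block of g^-1 h,
   defined on the open Q-saturated set where that block is invertible.  Finally, if g' = g p0 with
   p0 in P, then phi_g' is phi_g composed with left translation by the upper left block of p0, so the
   two push-forwards agree by the invariance of the measure. *)

theory Submission
  imports Defs
begin

lemma map_sum_permutes:
  fixes q :: "'m \<Rightarrow> 'm"
  assumes "q permutes UNIV"
  shows "map_sum q (id :: unit \<Rightarrow> unit) permutes UNIV"
proof (rule bij_imp_permutes)
  show "bij (map_sum q (id :: unit \<Rightarrow> unit))"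
  proof (rule o_bij[where g = "map_sum (inv q) id"])
    show "map_sum (inv q) id \<circ> map_sum q (id :: unit \<Rightarrow> unit) = id"
      by (rule ext, case_tac x) (auto simp: permutes_inverses(2)[OF assms])
    show "map_sum q (id :: unit \<Rightarrow> unit) \<circ> map_sum (inv q) id = id"
      by (rule ext, case_tac x) (auto simp: permutes_inverses(1)[OF assms])
  qed
qed simp

lemma sign_map_sum:
  fixes q :: "'m::finite \<Rightarrow> 'm"
  assumes "q permutes UNIV"
  shows "sign (map_sum q (id :: unit \<Rightarrow> unit)) = sign q"
  using assms finite_class.finite_UNIV[where 'a='m]
proof (induction rule: permutes_induct)
  case id
  have "map_sum (id :: 'm \<Rightarrow> 'm) (id :: unit \<Rightarrow> unit) = id"
    by (rule ext, case_tac x) auto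
  then show ?case by (metis sign_id)
next
  case (swap a b p)
  have pp: "p permutes UNIV" and IH: "sign (map_sum p (id :: unit \<Rightarrow> unit)) = sign p"
    using swap by (auto simp: id_def)
  have p: "permutation p"
    using permutes_imp_permutation[OF finite pp] .
  have ep: "permutation (map_sum p (id :: unit \<Rightarrow> unit))"
    using permutes_imp_permutation[OF finite map_sum_permutes[OF pp]] .
  have e: "map_sum (Transposition.transpose a b \<circ> p) (id :: unit \<Rightarrow> unit)
      = Transposition.transpose (Inl a) (Inl b) \<circ> map_sum p id"
    by (rule ext, case_tac x) (auto simp: Transposition.transpose_def)
  have s1: "sign (Transposition.transpose (Inl a) (Inl b) \<circ> map_sum p (id :: unit \<Rightarrow> unit))
      = sign (Transposition.transpose (Inl a) (Inl b) :: 'm + unit \<Rightarrow> _) * sign p"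
    using IH by (simp only: sign_compose[OF permutation_swap_id ep])
  have s2: "sign (Transposition.transpose a b \<circ> p) = sign (Transposition.transpose a b) * sign p"
    by (rule sign_compose[OF permutation_swap_id p])
  show ?case unfolding e s1 s2 by (simp add: sign_swap_id)
qed

lemma permutes_fixing_Inr:
  "{p. p permutes (UNIV :: ('m + unit) set) \<and> p (Inr ()) = Inr ()}
     = (\<lambda>q. map_sum q id) ` {q. q permutes (UNIV :: 'm::finite set)}"
proof (intro set_eqI iffI)
  fix p :: "'m + unit \<Rightarrow> 'm + unit"
  assume "p \<in> {p. p permutes UNIV \<and> p (Inr ()) = Inr ()}"
  then have pp: "p permutes UNIV" and pr: "p (Inr ()) = Inr ()" by auto
  have inl: "isl (p (Inl a))" for a
  proof (cases "p (Inl a)")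
    case (Inr u)
    then have "p (Inl a) = p (Inr ())" using pr by simp
    then show ?thesis using permutes_inj[OF pp] by (auto dest: injD)
  qed simp
  define q where "q = projl \<circ> p \<circ> Inl"
  have pq: "p (Inl a) = Inl (q a)" for a
    using inl[of a] unfolding q_def by (cases "p (Inl a)") auto
  have "map_sum q id = p"
    by (rule ext, case_tac x) (auto simp: pq pr)
  moreover have inj: "inj q"
  proof (rule injI)
    fix a b assume "q a = q b"
    then have "p (Inl a) = p (Inl b)" by (simp add: pq)
    then show "a = b" using permutes_inj[OF pp] by (auto dest: injD)
  qed
  then have "q permutes UNIV"
    using finite_UNIV_inj_surj[OF finite_class.finite_UNIV inj]
    by (intro bij_imp_permutes) (auto simp: bij_def)
  ultimately show "p \<in> (\<lambda>q. map_sum q id) ` {q. q permutes UNIV}" by blast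
qed (auto intro: map_sum_permutes)

definition block_upper :: "'m::finite matd \<Rightarrow> bool" where
  "block_upper A \<longleftrightarrow> (\<forall>j. A $ Inr () $ Inl j = 0)"

lemma sum_UNIV_plus_unit:
  "(\<Sum>k\<in>(UNIV :: ('m::finite + unit) set). f k) = (\<Sum>a\<in>UNIV. f (Inl a)) + f (Inr ())"
proof -
  have "(\<Sum>k\<in>(UNIV :: ('m + unit) set). f k) = (\<Sum>k\<in>UNIV <+> UNIV. f k)" by simp
  also have "\<dots> = (\<Sum>a\<in>UNIV. f (Inl a)) + f (Inr ())"
    by (subst sum.Plus) (auto simp: UNIV_unit)
  finally show ?thesis .
qed

lemma prod_UNIV_plus_unit:
  "(\<Prod>k\<in>(UNIV :: ('m::finite + unit) set). f k) = (\<Prod>a\<in>UNIV. f (Inl a)) * f (Inr ())"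
proof -
  have "(\<Prod>k\<in>(UNIV :: ('m + unit) set). f k) = (\<Prod>k\<in>UNIV <+> UNIV. f k)" by simp
  also have "\<dots> = (\<Prod>a\<in>UNIV. f (Inl a)) * f (Inr ())"
    by (subst prod.Plus) (auto simp: UNIV_unit)
  finally show ?thesis .
qed

lemma det_block_upper:
  fixes A :: "'m::finite matd"
  assumes "block_upper A"
  shows "det A = det (ulblock A) * A $ Inr () $ Inr ()"
proof -
  let ?f = "\<lambda>p. of_int (sign p) * (\<Prod>i\<in>UNIV. A $ i $ p i)"
  let ?S = "{p. p permutes (UNIV :: ('m + unit) set)}"
  let ?T = "{p. p permutes (UNIV :: ('m + unit) set) \<and> p (Inr ()) = Inr ()}"
  have "det A = sum ?f ?S" unfolding det_def by simp
  also have "\<dots> = sum ?f ?T"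
  proof (rule sum.mono_neutral_right)
    show "\<forall>p\<in>?S - ?T. ?f p = 0"
    proof
      fix p assume "p \<in> ?S - ?T"
      then obtain j where "p (Inr ()) = Inl j" by (cases "p (Inr ())") auto
      then have "A $ Inr () $ p (Inr ()) = 0" using assms by (simp add: block_upper_def)
      then have "(\<Prod>i\<in>UNIV. A $ i $ p i) = 0" by (intro prod_zero) auto
      then show "?f p = 0" by simp
    qed
  qed (auto simp: finite_permutations)
  also have "\<dots> = sum (?f \<circ> (\<lambda>q. map_sum q id)) {q. q permutes UNIV}"
    unfolding permutes_fixing_Inr
  proof (rule sum.reindex, rule inj_onI)
    fix q q' :: "'m \<Rightarrow> 'm"
    assume "map_sum q (id :: unit \<Rightarrow> unit) = map_sum q' id"
    then have "map_sum q (id :: unit \<Rightarrow> unit) (Inl a) = map_sum q' id (Inl a)" for a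
      by (rule fun_cong)
    then show "q = q'" by auto
  qed
  also have "\<dots> = (\<Sum>q | q permutes UNIV.
      of_int (sign q) * (\<Prod>a\<in>UNIV. A $ Inl a $ Inl (q a)) * A $ Inr () $ Inr ())"
    by (rule sum.cong) (simp_all add: sign_map_sum prod_UNIV_plus_unit)
  also have "\<dots> = det (ulblock A) * A $ Inr () $ Inr ()"
    unfolding det_def ulblock_def by (simp add: sum_distrib_right)
  finally show ?thesis .
qed

lemma ulblock_mult:
  assumes "block_upper B"
  shows "ulblock (A ** B) = ulblock A ** ulblock B"
  using assms unfolding block_upper_def ulblock_def matrix_matrix_mult_def
  by (simp add: vec_eq_iff sum_UNIV_plus_unit)

lemma block_upper_mult:
  "block_upper A \<Longrightarrow> block_upper B \<Longrightarrow> block_upper (A ** B)"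
  unfolding block_upper_def matrix_matrix_mult_def by (simp add: sum_UNIV_plus_unit)

lemma block_upper_mat_1: "block_upper (mat 1)"
  unfolding block_upper_def by (simp add: mat_def)

lemma ulblock_mat_1: "ulblock (mat 1 :: 'm::finite matd) = mat 1"
  unfolding ulblock_def mat_def by (simp add: vec_eq_iff)

lemma matrix_inv_right:
  fixes A :: "real^'n::finite^'n"
  assumes "det A \<noteq> 0"
  shows "A ** matrix_inv A = mat 1"
proof -
  have "\<exists>A'. A ** A' = mat 1 \<and> A' ** A = mat 1"
    using assms invertible_det_nz unfolding invertible_def by blast
  then have "A ** matrix_inv A = mat 1 \<and> matrix_inv A ** A = mat 1"
    unfolding matrix_inv_def by (rule someI_ex)
  then show ?thesis ..
qed

lemma matrix_inv_left:
  fixes A :: "real^'n::finite^'n"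
  shows "det A \<noteq> 0 \<Longrightarrow> matrix_inv A ** A = mat 1"
  using matrix_inv_right matrix_left_right_inverse by blast

lemma matrix_inv_unique:
  fixes A B :: "real^'n::finite^'n"
  assumes "A ** B = mat 1"
  shows "matrix_inv A = B"
proof -
  have "det A \<noteq> 0"
    using assms invertible_right_inverse invertible_det_nz by blast
  then have "matrix_inv A = matrix_inv A ** (A ** B)" using assms by simp
  also have "\<dots> = B" by (simp add: matrix_mul_assoc matrix_inv_left \<open>det A \<noteq> 0\<close>)
  finally show ?thesis .
qed

lemma det_matrix_inv:
  fixes A :: "real^'n::finite^'n"
  assumes "det A \<noteq> 0"
  shows "det (matrix_inv A) = 1 / det A"
  using det_mul[of A "matrix_inv A"] assms by (simp add: matrix_inv_right field_simps)

lemma matrix_inv_mult: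
  fixes A B :: "real^'n::finite^'n"
  assumes "det A \<noteq> 0" "det B \<noteq> 0"
  shows "matrix_inv (A ** B) = matrix_inv B ** matrix_inv A"
proof (rule matrix_inv_unique)
  have "A ** B ** (matrix_inv B ** matrix_inv A) = A ** (B ** matrix_inv B) ** matrix_inv A"
    by (simp add: matrix_mul_assoc)
  then show "A ** B ** (matrix_inv B ** matrix_inv A) = mat 1"
    by (simp add: matrix_inv_right assms)
qed

lemma matrix_inv_matrix_inv:
  fixes A :: "real^'n::finite^'n"
  assumes "det A \<noteq> 0"
  shows "matrix_inv (matrix_inv A) = A"
  by (rule matrix_inv_unique) (simp add: matrix_inv_left assms)

lemma matrix_inv_scaleR:
  fixes A :: "real^'n::finite^'n"
  assumes "det A \<noteq> 0" "l \<noteq> 0"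
  shows "matrix_inv (l *\<^sub>R A) = (1 / l) *\<^sub>R matrix_inv A"
proof (rule matrix_inv_unique)
  have "(l *\<^sub>R A) ** ((1 / l) *\<^sub>R matrix_inv A) = (l * (1 / l)) *\<^sub>R (A ** matrix_inv A)"
    by (simp add: matrix_scalar_ac scalar_matrix_assoc[symmetric])
  then show "(l *\<^sub>R A) ** ((1 / l) *\<^sub>R matrix_inv A) = mat 1"
    using assms by (simp add: matrix_inv_right)
qed

lemma ulblock_matrix_inv:
  fixes A :: "'m::finite matd"
  assumes A: "block_upper A" and d: "det A \<noteq> 0"
  shows "ulblock (matrix_inv A) = matrix_inv (ulblock A)"
proof -
  have "ulblock (matrix_inv A) ** ulblock A = mat 1"
    using ulblock_mult[OF A, of "matrix_inv A"] by (simp add: matrix_inv_left[OF d] ulblock_mat_1)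
  then have "ulblock A ** ulblock (matrix_inv A) = mat 1"
    using matrix_left_right_inverse by blast
  then show ?thesis using matrix_inv_unique by metis
qed

lemma block_upper_matrix_inv:
  fixes A :: "'m::finite matd"
  assumes A: "block_upper A" and d: "det A \<noteq> 0"
  shows "block_upper (matrix_inv A)"
proof -
  have du: "det (ulblock A) \<noteq> 0" using d det_block_upper[OF A] by auto
  define r where "r = (\<chi> a. matrix_inv A $ Inr () $ Inl a)"
  have "(matrix_inv A ** A) $ Inr () $ Inl j = 0" for j
    by (simp add: matrix_inv_left[OF d] mat_def)
  then have "r v* ulblock A = 0"
    using A unfolding block_upper_def r_def matrix_matrix_mult_def vector_matrix_mult_def ulblock_def
    by (simp add: vec_eq_iff sum_UNIV_plus_unit)
  then have "r = 0"
    by (metis vector_matrix_mul_assoc matrix_inv_right[OF du] vector_matrix_mul_rid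
        vector_matrix_mult_0)
  then show ?thesis
    unfolding block_upper_def r_def by (simp add: vec_eq_iff)
qed

lemma GLZ_det_nz: "\<gamma> \<in> GLZ \<Longrightarrow> det (\<gamma> :: real^'n::finite^'n) \<noteq> 0"
  unfolding GLZ_def using invertible_det_nz by blast

lemma mat_1_GLZ: "(mat 1 :: real^'n::finite^'n) \<in> GLZ"
proof -
  have "matrix_inv (mat 1 :: real^'n^'n) = mat 1" by (rule matrix_inv_unique) simp
  moreover have "invertible (mat 1 :: real^'n^'n)"
    unfolding invertible_def by (rule exI[of _ "mat 1"]) simp
  ultimately show ?thesis by (simp add: GLZ_def mat_def)
qed

lemma GLZ_mult:
  assumes "\<gamma> \<in> GLZ" "\<delta> \<in> GLZ"
  shows "(\<gamma> ** \<delta> :: real^'n::finite^'n) \<in> GLZ"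
proof -
  have ints: "(X ** Y) $ i $ j \<in> \<int>" if "\<forall>i j. X $ i $ j \<in> \<int>" "\<forall>i j. Y $ i $ j \<in> \<int>"
    for X Y :: "real^'n^'n" and i j
    using that unfolding matrix_matrix_mult_def by (auto intro: Ints_mult)
  show ?thesis using assms GLZ_det_nz[OF assms(1)] GLZ_det_nz[OF assms(2)] unfolding GLZ_def
    by (auto simp: matrix_inv_mult invertible_mult intro: ints)
qed

lemma GLZ_matrix_inv:
  assumes "\<gamma> \<in> GLZ"
  shows "matrix_inv (\<gamma> :: real^'n::finite^'n) \<in> GLZ"
proof -
  have d: "det \<gamma> \<noteq> 0" using assms GLZ_det_nz by auto
  then have "invertible (matrix_inv \<gamma>)"
    unfolding invertible_det_nz using det_matrix_inv[OF d] by simp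
  then show ?thesis using assms unfolding GLZ_def by (simp add: matrix_inv_matrix_inv d)
qed

definition matrix_group :: "(real^'n::finite^'n) set \<Rightarrow> bool" where
  "matrix_group G \<longleftrightarrow> mat 1 \<in> G \<and> (\<forall>x\<in>G. \<forall>y\<in>G. x ** y \<in> G)
     \<and> (\<forall>x\<in>G. det x \<noteq> 0 \<and> matrix_inv x \<in> G)"

lemma matrix_groupI:
  assumes "mat 1 \<in> G" "\<And>x y. x \<in> G \<Longrightarrow> y \<in> G \<Longrightarrow> x ** y \<in> G"
    "\<And>x. x \<in> G \<Longrightarrow> det x \<noteq> 0" "\<And>x. x \<in> G \<Longrightarrow> matrix_inv x \<in> G"
  shows "matrix_group G"
  using assms unfolding matrix_group_def by blast

lemma
  assumes "matrix_group G"
  shows matrix_group_one: "mat 1 \<in> G"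
    and matrix_group_mult: "x \<in> G \<Longrightarrow> y \<in> G \<Longrightarrow> x ** y \<in> G"
    and matrix_group_det_nz: "x \<in> G \<Longrightarrow> det x \<noteq> 0"
    and matrix_group_matrix_inv: "x \<in> G \<Longrightarrow> matrix_inv x \<in> G"
  using assms unfolding matrix_group_def by blast+

lemma Hgrp_det_nz: "x \<in> Hgrp \<Longrightarrow> det (x :: real^'n::finite^'n) \<noteq> 0"
proof -
  assume "x \<in> Hgrp"
  then obtain l \<gamma> where "x = l *\<^sub>R \<gamma>" "l \<noteq> 0" "\<gamma> \<in> GLZ" unfolding Hgrp_def by blast
  then show ?thesis
    using GLZ_det_nz scalar_invertible[of l \<gamma>] invertible_det_nz by auto
qed

lemma HgrpI: "l \<noteq> 0 \<Longrightarrow> \<gamma> \<in> GLZ \<Longrightarrow> l *\<^sub>R (\<gamma> :: real^'n::finite^'n) \<in> Hgrp"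
  unfolding Hgrp_def by blast

lemma matrix_group_Hgrp: "matrix_group (Hgrp :: (real^'n::finite^'n) set)"
proof (rule matrix_groupI)
  show "mat 1 \<in> (Hgrp :: (real^'n^'n) set)"
    using HgrpI[OF _ mat_1_GLZ, of 1] by simp
  fix x y :: "real^'n^'n"
  assume "x \<in> Hgrp"
  then obtain l \<gamma> where x: "x = l *\<^sub>R \<gamma>" "l \<noteq> 0" "\<gamma> \<in> GLZ" unfolding Hgrp_def by blast
  show "det x \<noteq> 0" using \<open>x \<in> Hgrp\<close> by (rule Hgrp_det_nz)
  have "matrix_inv x = (1 / l) *\<^sub>R matrix_inv \<gamma>"
    unfolding x using x GLZ_det_nz matrix_inv_scaleR by blast
  then show "matrix_inv x \<in> Hgrp"
    using x by (simp add: HgrpI GLZ_matrix_inv)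
  assume "y \<in> Hgrp"
  then obtain k \<delta> where y: "y = k *\<^sub>R \<delta>" "k \<noteq> 0" "\<delta> \<in> GLZ" unfolding Hgrp_def by blast
  have "x ** y = (l * k) *\<^sub>R (\<gamma> ** \<delta>)"
    unfolding x y by (simp add: matrix_scalar_ac scalar_matrix_assoc[symmetric])
  then show "x ** y \<in> Hgrp"
    using x y by (simp add: HgrpI GLZ_mult)
qed

lemma lcoset_self: "matrix_group G \<Longrightarrow> A \<in> lcoset A G"
  unfolding lcoset_def by (auto intro!: image_eqI[of _ _ "mat 1"] matrix_group_one)

lemma lcosetE:
  assumes "B \<in> lcoset A G"
  obtains x where "x \<in> G" "B = A ** x"
  using assms unfolding lcoset_def by auto

lemma lcoset_lcoset: "lcoset h (lcoset m G) = lcoset (h ** m) G"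
  unfolding lcoset_def by (auto simp: image_image matrix_mul_assoc)

lemma lcoset_mult_right:
  assumes G: "matrix_group G" and x: "x \<in> G"
  shows "lcoset (A ** x) G = lcoset A G"
proof
  show "lcoset (A ** x) G \<subseteq> lcoset A G"
    using matrix_group_mult[OF G x] unfolding lcoset_def
    by (auto simp flip: matrix_mul_assoc intro!: imageI)
  show "lcoset A G \<subseteq> lcoset (A ** x) G"
  proof
    fix z assume "z \<in> lcoset A G"
    then obtain y where y: "y \<in> G" "z = A ** y" by (rule lcosetE)
    have "z = (A ** x) ** (matrix_inv x ** y)"
      using y matrix_inv_right[OF matrix_group_det_nz[OF G x]]
      by (metis matrix_mul_assoc matrix_mul_lid)
    moreover have "matrix_inv x ** y \<in> G"
      using G x y by (simp add: matrix_group_mult matrix_group_matrix_inv)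
    ultimately show "z \<in> lcoset (A ** x) G" unfolding lcoset_def by auto
  qed
qed

lemma lcoset_eq_iff:
  assumes G: "matrix_group G" and A: "det A \<noteq> 0"
  shows "lcoset A G = lcoset B G \<longleftrightarrow> matrix_inv A ** B \<in> G"
proof
  assume "lcoset A G = lcoset B G"
  then have "B \<in> lcoset A G" using lcoset_self[OF G, of B] by simp
  then obtain x where "x \<in> G" "B = A ** x" by (rule lcosetE)
  then show "matrix_inv A ** B \<in> G" by (simp add: matrix_mul_assoc matrix_inv_left A)
next
  assume "matrix_inv A ** B \<in> G"
  moreover have "B = A ** (matrix_inv A ** B)"
    by (simp add: matrix_mul_assoc matrix_inv_right A)
  ultimately show "lcoset A G = lcoset B G" using lcoset_mult_right[OF G] by metis
qed

lemma some_lcoset: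
  assumes "matrix_group G"
  obtains x where "x \<in> G" "(SOME h'. h' \<in> lcoset h G) = h ** x"
proof -
  have "(SOME h'. h' \<in> lcoset h G) \<in> lcoset h G"
    using lcoset_self[OF assms] by (rule someI)
  then show ?thesis using that by (auto elim: lcosetE)
qed

lemma Pgrp_iff: "A \<in> Pgrp \<longleftrightarrow> block_upper A \<and> det A = 1"
proof
  assume "A \<in> Pgrp"
  then show "block_upper A \<and> det A = 1"
    using det_block_upper[of A] unfolding Pgrp_def block_upper_def by auto
next
  assume A: "block_upper A \<and> det A = 1"
  then have h: "det (ulblock A) * A $ Inr () $ Inr () = 1" using det_block_upper[of A] by auto
  then have "det (ulblock A) \<noteq> 0" by auto
  with h have "A $ Inr () $ Inr () = 1 / det (ulblock A)" by (simp add: field_simps)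
  with A \<open>det (ulblock A) \<noteq> 0\<close> show "A \<in> Pgrp"
    unfolding Pgrp_def block_upper_def by auto
qed

lemma Pgrp_ulblock_det_nz: "A \<in> Pgrp \<Longrightarrow> det (ulblock A) \<noteq> 0"
  unfolding Pgrp_def by simp

lemma Qgrp_iff: "A \<in> Qgrp \<longleftrightarrow> A \<in> Pgrp \<and> ulblock A \<in> Hgrp"
proof
  assume A: "A \<in> Qgrp"
  then have H: "ulblock A \<in> Hgrp" unfolding Qgrp_def Hgrp_def by auto
  with A Hgrp_det_nz[OF H] show "A \<in> Pgrp \<and> ulblock A \<in> Hgrp"
    unfolding Qgrp_def Pgrp_def by auto
next
  assume "A \<in> Pgrp \<and> ulblock A \<in> Hgrp"
  then show "A \<in> Qgrp" unfolding Qgrp_def Pgrp_def Hgrp_def by auto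
qed

lemma matrix_group_Pgrp: "matrix_group Pgrp"
  by (rule matrix_groupI)
    (auto simp: Pgrp_iff block_upper_mat_1 block_upper_mult block_upper_matrix_inv
      det_mul det_matrix_inv)

lemma matrix_group_Qgrp: "matrix_group (Qgrp :: 'm::finite matd set)"
proof (rule matrix_groupI)
  note H = matrix_group_Hgrp and P = matrix_group_Pgrp
  show "mat 1 \<in> Qgrp"
    unfolding Qgrp_iff using matrix_group_one[OF H] matrix_group_one[OF P]
    by (simp add: ulblock_mat_1)
  fix x y :: "'m matd"
  assume "x \<in> Qgrp"
  then have xP: "x \<in> Pgrp" and xH: "ulblock x \<in> Hgrp" unfolding Qgrp_iff by auto
  then have ux: "block_upper x" and dx: "det x \<noteq> 0" by (simp_all add: Pgrp_iff)
  then show "det x \<noteq> 0" by simp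
  have "ulblock (matrix_inv x) = matrix_inv (ulblock x)" by (rule ulblock_matrix_inv[OF ux dx])
  then show "matrix_inv x \<in> Qgrp"
    unfolding Qgrp_iff
    using matrix_group_matrix_inv[OF H xH] matrix_group_matrix_inv[OF P xP] by simp
  assume "y \<in> Qgrp"
  then have yP: "y \<in> Pgrp" and yH: "ulblock y \<in> Hgrp" unfolding Qgrp_iff by auto
  then have "ulblock (x ** y) = ulblock x ** ulblock y" by (simp add: ulblock_mult Pgrp_iff)
  then show "x ** y \<in> Qgrp"
    unfolding Qgrp_iff using matrix_group_mult[OF H xH yH] matrix_group_mult[OF P xP yP] by simp
qed

lemma block_upper_mult_Pgrp_iff:
  assumes "q \<in> Pgrp"
  shows "block_upper (A ** q) \<longleftrightarrow> block_upper A"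
proof
  assume "block_upper A"
  then show "block_upper (A ** q)" using assms by (simp add: Pgrp_iff block_upper_mult)
next
  have q: "block_upper q" "det q \<noteq> 0" using assms by (simp_all add: Pgrp_iff)
  assume "block_upper (A ** q)"
  then have "block_upper (A ** q ** matrix_inv q)"
    using block_upper_mult block_upper_matrix_inv[OF q] by blast
  moreover have "A ** q ** matrix_inv q = A"
    by (metis matrix_mul_assoc matrix_inv_right[OF q(2)] matrix_mul_rid)
  ultimately show "block_upper A" by simp
qed

lemma block_upper_blockdiag: "block_upper (blockdiag m)"
  unfolding block_upper_def blockdiag_def by simp

lemma ulblock_blockdiag: "ulblock (blockdiag m) = m"
  unfolding blockdiag_def ulblock_def by (simp add: vec_eq_iff)

lemma blockdiag_Pgrp: "det m \<noteq> 0 \<Longrightarrow> blockdiag m \<in> Pgrp"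
  unfolding Pgrp_def by (simp add: ulblock_blockdiag) (simp add: blockdiag_def)

lemma lcoset_Qgrp_eq_iff:
  assumes g: "det g \<noteq> 0" and X: "X \<in> Pgrp" and Y: "Y \<in> Pgrp"
  shows "lcoset (g ** X) Qgrp = lcoset (g ** Y) Qgrp
    \<longleftrightarrow> matrix_inv (ulblock X) ** ulblock Y \<in> Hgrp"
proof -
  have dX: "det X \<noteq> 0" and uX: "block_upper X" and uY: "block_upper Y"
    using X Y unfolding Pgrp_iff by auto
  have "matrix_inv (g ** X) ** (g ** Y) = matrix_inv X ** (matrix_inv g ** g) ** Y"
    by (simp add: matrix_inv_mult g dX matrix_mul_assoc)
  also have "\<dots> = matrix_inv X ** Y" by (simp add: matrix_inv_left g)
  finally have "matrix_inv (g ** X) ** (g ** Y) = matrix_inv X ** Y" .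
  moreover have "matrix_inv X ** Y \<in> Pgrp"
    using matrix_group_Pgrp X Y by (intro matrix_group_mult matrix_group_matrix_inv)
  moreover have "ulblock (matrix_inv X ** Y) = matrix_inv (ulblock X) ** ulblock Y"
    by (simp add: ulblock_mult[OF uY] ulblock_matrix_inv[OF uX dX])
  moreover have "det (g ** X) \<noteq> 0" using g dX by (simp add: det_mul)
  ultimately show ?thesis
    by (simp add: lcoset_eq_iff[OF matrix_group_Qgrp] Qgrp_iff)
qed

lemma istopology_quot_top:
  "istopology (\<lambda>U. U \<subseteq> f ` topspace X \<and> openin X {x \<in> topspace X. f x \<in> U})"
  unfolding istopology_def
proof (rule conjI; intro allI impI)
  fix S T
  assume "S \<subseteq> f ` topspace X \<and> openin X {x \<in> topspace X. f x \<in> S}"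
    and "T \<subseteq> f ` topspace X \<and> openin X {x \<in> topspace X. f x \<in> T}"
  moreover have "{x \<in> topspace X. f x \<in> S \<inter> T}
      = {x \<in> topspace X. f x \<in> S} \<inter> {x \<in> topspace X. f x \<in> T}" by auto
  ultimately show "S \<inter> T \<subseteq> f ` topspace X \<and> openin X {x \<in> topspace X. f x \<in> S \<inter> T}"
    by auto
next
  fix K assume "\<forall>S\<in>K. S \<subseteq> f ` topspace X \<and> openin X {x \<in> topspace X. f x \<in> S}"
  moreover have "{x \<in> topspace X. f x \<in> \<Union>K} = (\<Union>S\<in>K. {x \<in> topspace X. f x \<in> S})"
    by auto
  ultimately show "\<Union>K \<subseteq> f ` topspace X \<and> openin X {x \<in> topspace X. f x \<in> \<Union>K}"
    by auto
qed

lemma openin_quot_top: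
  "openin (quot_top X f) U \<longleftrightarrow> U \<subseteq> f ` topspace X \<and> openin X {x \<in> topspace X. f x \<in> U}"
  unfolding quot_top_def topology_inverse'[OF istopology_quot_top] ..

lemma topspace_quot_top: "topspace (quot_top X f) = f ` topspace X"
proof -
  have "{x \<in> topspace X. f x \<in> f ` topspace X} = topspace X" by auto
  then have "openin (quot_top X f) (f ` topspace X)"
    unfolding openin_quot_top by auto
  moreover have "U \<subseteq> f ` topspace X" if "openin (quot_top X f) U" for U
    using that unfolding openin_quot_top by auto
  ultimately show ?thesis unfolding topspace_def by blast
qed

lemma continuous_map_quot_top: "continuous_map X (quot_top X f) f"
  unfolding continuous_map_def topspace_quot_top openin_quot_top by auto

lemma continuous_map_from_quot_top:
  assumes "continuous_map X Y (\<lambda>x. k (f x))"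
  shows "continuous_map (quot_top X f) Y k"
  unfolding continuous_map_def topspace_quot_top
proof (intro conjI allI impI)
  show "k \<in> f ` topspace X \<rightarrow> topspace Y"
    using assms unfolding continuous_map_def by auto
  fix U assume "openin Y U"
  moreover have "{x \<in> topspace X. f x \<in> {z \<in> f ` topspace X. k z \<in> U}}
      = {x \<in> topspace X. k (f x) \<in> U}" by auto
  ultimately show "openin (quot_top X f) {z \<in> f ` topspace X. k z \<in> U}"
    using assms unfolding openin_quot_top continuous_map_def by auto
qed

lemma openin_quot_top_image:
  assumes "openin X S"
    and saturated: "\<And>x y. x \<in> topspace X \<Longrightarrow> y \<in> S \<Longrightarrow> f x = f y \<Longrightarrow> x \<in> S"
  shows "openin (quot_top X f) (f ` S)"
proof -
  have "{x \<in> topspace X. f x \<in> f ` S} = S"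
    using saturated openin_subset[OF assms(1)] by auto
  then show ?thesis
    unfolding openin_quot_top using assms(1) openin_subset by auto
qed

lemma openin_quot_top_image_preimage:
  assumes U: "openin X U" and F: "continuous_map (subtopology X U) Y F" and W: "openin Y W"
    and saturated: "\<And>x y. x \<in> topspace X \<Longrightarrow> y \<in> U \<Longrightarrow> f x = f y \<Longrightarrow> x \<in> U \<and> F x = F y"
  shows "openin (quot_top X f) (f ` {x \<in> U. F x \<in> W})"
proof (rule openin_quot_top_image)
  have "{x \<in> U. F x \<in> W} = {x \<in> topspace (subtopology X U). F x \<in> W}"
    using openin_subset[OF U] by auto
  then show "openin X {x \<in> U. F x \<in> W}"
    using openin_continuous_map_preimage[OF F W] openin_trans_full U by metis
  show "x \<in> {x \<in> U. F x \<in> W}" if "x \<in> topspace X" "y \<in> {x \<in> U. F x \<in> W}" "f x = f y"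
    for x y
    using that saturated[of x y] by auto
qed

lemma continuous_map_quot_top_restrict:
  assumes U: "openin X U" and A: "A \<subseteq> U"
    and F: "continuous_map (subtopology X U) Y F"
    and saturated: "\<And>x y. x \<in> topspace X \<Longrightarrow> y \<in> U \<Longrightarrow> f x = f y \<Longrightarrow> x \<in> U \<and> F x = F y"
    and k: "\<And>x. x \<in> A \<Longrightarrow> k (f x) = F x"
  shows "continuous_map (subtopology (quot_top X f) (f ` A)) Y k"
proof -
  have UX: "U \<subseteq> topspace X" using openin_subset[OF U] .
  have top: "topspace (subtopology (quot_top X f) (f ` A)) = f ` A"
    using A UX by (auto simp: topspace_quot_top)
  have "k (f a) \<in> topspace Y" if "a \<in> A" for a
  proof -
    have "a \<in> topspace (subtopology X U)" using that A UX by auto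
    then show ?thesis using that k continuous_map_funspace[OF F] by auto
  qed
  moreover have preimage: "{c \<in> f ` A. k c \<in> W} = f ` {x \<in> U. F x \<in> W} \<inter> f ` A" for W
  proof (intro set_eqI iffI)
    fix c assume "c \<in> {c \<in> f ` A. k c \<in> W}"
    then obtain a where a: "a \<in> A" "c = f a" "k c \<in> W" by blast
    then have "a \<in> {x \<in> U. F x \<in> W}" using A k[of a] by auto
    then show "c \<in> f ` {x \<in> U. F x \<in> W} \<inter> f ` A" using a by blast
  next
    fix c assume c: "c \<in> f ` {x \<in> U. F x \<in> W} \<inter> f ` A"
    then obtain s where s: "s \<in> U" "F s \<in> W" "c = f s" by auto
    obtain a where a: "a \<in> A" "c = f a" using c by auto
    then have "F a = F s" using A UX s saturated[of a s] by auto
    moreover have "k c = F a" unfolding a(2) using a(1) k by simp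
    ultimately show "c \<in> {c \<in> f ` A. k c \<in> W}" using a s by simp
  qed
  moreover have "openin (subtopology (quot_top X f) (f ` A)) {c \<in> f ` A. k c \<in> W}"
    if "openin Y W" for W
    unfolding openin_subtopology preimage
    using openin_quot_top_image_preimage[OF U F that saturated] by blast
  ultimately show ?thesis
    unfolding continuous_map_def top by blast
qed

lemma topspace_Xdd: "topspace Xdd = (\<lambda>h. lcoset h Qgrp) ` SL"
  unfolding Xdd_def topspace_quot_top by simp

lemma topspace_Xlow: "topspace Xlow = (\<lambda>m. lcoset m Hgrp) ` GLR"
  unfolding Xlow_def topspace_quot_top by simp

lemma span_axes_Inl:
  "span ((\<lambda>i. axis (Inl i) 1) ` (UNIV :: 'm::finite set))
     = {x :: real^('m + unit). x $ Inr () = 0}"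
proof
  show "span ((\<lambda>i. axis (Inl i) 1) ` UNIV) \<subseteq> {x :: real^('m + unit). x $ Inr () = 0}"
    by (rule span_minimal) (auto simp: axis_def subspace_def)
  show "{x :: real^('m + unit). x $ Inr () = 0} \<subseteq> span ((\<lambda>i. axis (Inl i) 1) ` UNIV)"
  proof
    fix x :: "real^('m + unit)" assume "x \<in> {x. x $ Inr () = 0}"
    then have "x = (\<Sum>a\<in>UNIV. x $ Inl a *\<^sub>R axis (Inl a) 1)"
      using basis_expansion[of x] by (simp add: sum_UNIV_plus_unit scalar_mult_eq_scaleR)
    also have "\<dots> \<in> span ((\<lambda>i. axis (Inl i) 1) ` UNIV)"
      by (intro span_sum span_scale span_base) auto
    finally show "x \<in> span ((\<lambda>i. axis (Inl i) 1) ` UNIV)" .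
  qed
qed

lemma span_image_axes_Inl:
  fixes g :: "'m::finite matd"
  shows "span ((\<lambda>i. g *v axis (Inl i) 1) ` (UNIV :: 'm set))
    = (\<lambda>x. g *v x) ` {x. x $ Inr () = 0}"
  using span_linear_image[OF matrix_vector_mul_linear[of g], of "(\<lambda>i. axis (Inl i) 1) ` UNIV"]
  by (simp add: image_image span_axes_Inl)

lemma image_subset_matrix_image_iff:
  fixes g :: "real^'n::finite^'n"
  assumes "det g \<noteq> 0"
  shows "(\<lambda>v. h *v v) ` S \<subseteq> (\<lambda>x. g *v x) ` T
    \<longleftrightarrow> (\<lambda>v. (matrix_inv g ** h) *v v) ` S \<subseteq> T"
proof -
  have "y \<in> (\<lambda>x. g *v x) ` T \<longleftrightarrow> matrix_inv g *v y \<in> T" for y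
    using assms
    by (auto simp: matrix_vector_mul_assoc matrix_inv_left matrix_inv_right
        intro!: image_eqI[of _ _ "matrix_inv g *v y"])
  then show ?thesis unfolding image_subset_iff by (simp add: matrix_vector_mul_assoc)
qed

lemma hclass_subset_subspace_iff:
  assumes "subspace V"
  shows "(\<forall>L\<in>hclass S. L \<subseteq> V) \<longleftrightarrow> S \<subseteq> V"
proof
  assume "\<forall>L\<in>hclass S. L \<subseteq> V"
  moreover have "(\<lambda>v. 1 *\<^sub>R v) ` S \<in> hclass S"
    unfolding hclass_def by (intro CollectI exI[of _ "1::real"]) simp
  ultimately show "S \<subseteq> V" by auto
qed (auto simp: hclass_def subspace_scale[OF assms])

lemma matrix_image_Lambda0_subset_iff:
  fixes A :: "'m::finite matd"
  shows "(\<lambda>v. A *v v) ` Lambda0 \<subseteq> {x. x $ Inr () = 0} \<longleftrightarrow> block_upper A"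
proof
  assume sub: "(\<lambda>v. A *v v) ` Lambda0 \<subseteq> {x. x $ Inr () = 0}"
  have "axis (Inl j) 1 \<in> (Lambda0 :: (real^('m + unit)) set)" for j
    unfolding Lambda0_def
    by (intro CollectI exI[of _ "\<lambda>i. if i = j then 1 else 0"])
      (simp add: if_distrib if_distribR cong: if_cong)
  then have "(A *v axis (Inl j) 1) $ Inr () = 0" for j using sub by auto
  then show "block_upper A"
    unfolding block_upper_def by (simp add: matrix_vector_mult_basis column_def)
next
  assume A: "block_upper A"
  show "(\<lambda>v. A *v v) ` Lambda0 \<subseteq> {x. x $ Inr () = 0}"
  proof clarify
    fix v :: "real^('m + unit)" assume "v \<in> Lambda0"
    then have "v $ Inr () = 0" unfolding Lambda0_def by (auto simp: axis_def)
    then show "(A *v v) $ Inr () = 0"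
      using A unfolding block_upper_def matrix_vector_mult_def by (simp add: sum_UNIV_plus_unit)
  qed
qed

lemma lcoset_Qgrp_in_XP_iff:
  fixes g h :: "'m::finite matd"
  assumes g: "g \<in> SL" and h: "h \<in> SL"
  shows "lcoset h Qgrp \<in> XP (span ((\<lambda>i. g *v axis (Inl i) 1) ` UNIV))
    \<longleftrightarrow> matrix_inv g ** h \<in> Pgrp"
proof -
  obtain q where q: "q \<in> Qgrp" "(SOME h'. h' \<in> lcoset h Qgrp) = h ** q"
    by (rule some_lcoset[OF matrix_group_Qgrp])
  have qP: "q \<in> Pgrp" using q(1) by (simp add: Qgrp_iff)
  have dg: "det g = 1" using g by (simp add: SL_def)
  have "lcoset h Qgrp \<in> topspace Xdd" using h by (simp add: topspace_Xdd)
  then have "lcoset h Qgrp \<in> XP (span ((\<lambda>i. g *v axis (Inl i) 1) ` UNIV))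
      \<longleftrightarrow> (\<lambda>v. (h ** q) *v v) ` Lambda0 \<subseteq> (\<lambda>x. g *v x) ` {x. x $ Inr () = 0}"
    unfolding XP_def ident_def
    by (simp add: q(2) hclass_subset_subspace_iff span_image_axes_Inl[symmetric])
  also have "\<dots> \<longleftrightarrow> block_upper (matrix_inv g ** h ** q)"
    using dg by (simp add: image_subset_matrix_image_iff matrix_image_Lambda0_subset_iff
        matrix_mul_assoc)
  also have "\<dots> \<longleftrightarrow> matrix_inv g ** h \<in> Pgrp"
    using g h by (simp add: block_upper_mult_Pgrp_iff[OF qP] Pgrp_iff SL_def det_mul det_matrix_inv)
  finally show ?thesis .
qed

lemma XP_eq_Pgrp_lcosets:
  fixes g :: "'m::finite matd"
  assumes g: "g \<in> SL"
  shows "XP (span ((\<lambda>i. g *v axis (Inl i) 1) ` UNIV)) = {lcoset (g ** p) Qgrp | p. p \<in> Pgrp}"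
    (is "?XP = ?cosets")
proof
  have dg: "det g \<noteq> 0" using g by (simp add: SL_def)
  show "?XP \<subseteq> ?cosets"
  proof
    fix c assume c: "c \<in> ?XP"
    then obtain h where h: "h \<in> SL" "c = lcoset h Qgrp"
      unfolding XP_def topspace_Xdd by auto
    then have "matrix_inv g ** h \<in> Pgrp" using c lcoset_Qgrp_in_XP_iff[OF g] by simp
    moreover have "g ** (matrix_inv g ** h) = h"
      by (simp add: matrix_mul_assoc matrix_inv_right[OF dg])
    ultimately show "c \<in> ?cosets" using h(2) by force
  qed
  show "?cosets \<subseteq> ?XP"
  proof clarify
    fix p :: "'m matd" assume "p \<in> Pgrp"
    moreover have "g ** p \<in> SL"
      using g \<open>p \<in> Pgrp\<close> by (simp add: SL_def Pgrp_iff det_mul)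
    ultimately show "lcoset (g ** p) Qgrp \<in> ?XP"
      using lcoset_Qgrp_in_XP_iff[OF g]
      by (simp add: matrix_mul_assoc matrix_inv_left[OF dg])
  qed
qed

lemma phi_lcoset:
  assumes g: "det g \<noteq> 0" and m: "det m \<noteq> 0"
  shows "phi g (lcoset m Hgrp) = lcoset (g ** blockdiag m) Qgrp"
proof -
  obtain x where x: "x \<in> Hgrp" "(SOME m'. m' \<in> lcoset m Hgrp) = m ** x"
    by (rule some_lcoset[OF matrix_group_Hgrp])
  have dx: "det x \<noteq> 0" and "matrix_inv x \<in> Hgrp"
    using matrix_group_det_nz[OF matrix_group_Hgrp x(1)]
      matrix_group_matrix_inv[OF matrix_group_Hgrp x(1)] .
  moreover have "matrix_inv (m ** x) ** m = matrix_inv x"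
    using m dx by (simp add: matrix_inv_mult matrix_mul_assoc[symmetric] matrix_inv_left)
  moreover have "det (m ** x) \<noteq> 0" using m dx by (simp add: det_mul)
  ultimately show ?thesis
    unfolding phi_def x(2)
    using lcoset_Qgrp_eq_iff[OF g blockdiag_Pgrp blockdiag_Pgrp[OF m], of "m ** x"]
    by (simp add: ulblock_blockdiag)
qed

lemma lcoset_blockdiag_ulblock:
  assumes g: "det g \<noteq> 0" and p: "p \<in> Pgrp"
  shows "lcoset (g ** blockdiag (ulblock p)) Qgrp = lcoset (g ** p) Qgrp"
  using Pgrp_ulblock_det_nz[OF p] matrix_group_one[OF matrix_group_Hgrp]
  by (simp add: lcoset_Qgrp_eq_iff[OF g blockdiag_Pgrp p] ulblock_blockdiag matrix_inv_left)

text \<open>Only meaningful on XP: there every representative of c has the form g p with p in P,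
so this recovers the upper left block of p.\<close>
definition phi_inv :: "'m::finite matd \<Rightarrow> 'm matd set \<Rightarrow> 'm mat1 set" where
  "phi_inv g c = lcoset (ulblock (matrix_inv g ** (SOME h. h \<in> c))) Hgrp"

lemma phi_inv_lcoset:
  assumes g: "det g \<noteq> 0" and p: "p \<in> Pgrp"
  shows "phi_inv g (lcoset (g ** p) Qgrp) = lcoset (ulblock p) Hgrp"
proof -
  obtain q where q: "q \<in> Qgrp" "(SOME h. h \<in> lcoset (g ** p) Qgrp) = g ** p ** q"
    by (rule some_lcoset[OF matrix_group_Qgrp])
  then have "ulblock (matrix_inv g ** (SOME h. h \<in> lcoset (g ** p) Qgrp)) = ulblock p ** ulblock q"
    by (simp add: matrix_mul_assoc matrix_inv_left[OF g] ulblock_mult Qgrp_iff Pgrp_iff)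
  moreover have "ulblock q \<in> Hgrp" using q(1) by (simp add: Qgrp_iff)
  ultimately show ?thesis
    unfolding phi_inv_def by (simp add: lcoset_mult_right[OF matrix_group_Hgrp])
qed

lemma continuous_on_det:
  fixes F :: "'a::topological_space \<Rightarrow> real^'n::finite^'n"
  shows "continuous_on S F \<Longrightarrow> continuous_on S (\<lambda>x. det (F x))"
  unfolding det_def by (intro continuous_intros)

lemma open_GLR: "open (GLR :: (real^'n::finite^'n) set)"
  by (rule open_Collect_neq[OF continuous_on_det[OF continuous_on_id] continuous_on_const])

lemma continuous_on_blockdiag_entry:
  "continuous_on GLR (\<lambda>m :: 'm::finite mat1. blockdiag m $ k $ j)"
proof (cases k; cases j)
  fix a b assume "k = Inl a" "j = Inl b"
  then show ?thesis unfolding blockdiag_def by (simp add: continuous_on_component)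
next
  fix a b assume "k = Inr a" "j = Inr b"
  then show ?thesis unfolding blockdiag_def
    by (simp add: continuous_on_divide continuous_on_det[OF continuous_on_id])
qed (simp_all add: blockdiag_def)

lemma continuous_map_phi:
  fixes g :: "'m::finite matd"
  assumes g: "g \<in> SL"
  shows "continuous_map Xlow Xdd (phi g)"
  unfolding Xlow_def
proof (rule continuous_map_from_quot_top)
  have dg: "det g = 1" using g by (simp add: SL_def)
  have "continuous_on GLR (\<lambda>m :: 'm mat1. g ** blockdiag m)"
    unfolding matrix_matrix_mult_def by (intro continuous_intros continuous_on_blockdiag_entry)
  moreover have "g ** blockdiag m \<in> SL" if "m \<in> GLR" for m :: "'m mat1"
    using that blockdiag_Pgrp[of m] dg by (simp add: SL_def det_mul Pgrp_iff)
  ultimately have "continuous_map (top_of_set GLR) (top_of_set SL) (\<lambda>m :: 'm mat1. g ** blockdiag m)"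
    by (simp add: Pi_iff)
  then have "continuous_map (top_of_set GLR) Xdd
      ((\<lambda>h. lcoset h Qgrp) \<circ> (\<lambda>m :: 'm mat1. g ** blockdiag m))"
    unfolding Xdd_def using continuous_map_quot_top by (rule continuous_map_compose)
  then show "continuous_map (top_of_set GLR) Xdd (\<lambda>m :: 'm mat1. phi g (lcoset m Hgrp))"
    by (rule continuous_map_eq) (simp add: phi_lcoset dg)
qed

lemma open_ulblock_invertible: "open {h :: 'm::finite matd. det (ulblock (a ** h)) \<noteq> 0}"
proof -
  have "continuous_on UNIV (\<lambda>h :: 'm matd. ulblock (a ** h))"
    unfolding ulblock_def matrix_matrix_mult_def by (intro continuous_intros)
  then show ?thesis
    using continuous_open_vimage[OF open_GLR, of "\<lambda>h :: 'm matd. ulblock (a ** h)"]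
    by (simp add: continuous_on_eq_continuous_at[OF open_UNIV])
qed

lemma continuous_map_lcoset_ulblock:
  fixes a :: "'m::finite matd"
  shows "continuous_map (top_of_set {h. det (ulblock (a ** h)) \<noteq> 0}) Xlow
    (\<lambda>h. lcoset (ulblock (a ** h)) Hgrp)"
proof -
  have "continuous_on {h. det (ulblock (a ** h)) \<noteq> 0} (\<lambda>h :: 'm matd. ulblock (a ** h))"
    unfolding ulblock_def matrix_matrix_mult_def by (intro continuous_intros)
  then have "continuous_map (top_of_set {h. det (ulblock (a ** h)) \<noteq> 0}) (top_of_set GLR)
      (\<lambda>h :: 'm matd. ulblock (a ** h))"
    by (simp add: Pi_iff)
  then show ?thesis
    unfolding Xlow_def using continuous_map_quot_top
    by (rule continuous_map_compose[unfolded o_def])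
qed

lemma ulblock_lcoset_Qgrp_invariant:
  assumes xy: "lcoset x Qgrp = lcoset y Qgrp" and y: "det (ulblock (a ** y)) \<noteq> 0"
  shows "det (ulblock (a ** x)) \<noteq> 0
    \<and> lcoset (ulblock (a ** x)) Hgrp = lcoset (ulblock (a ** y)) Hgrp"
proof -
  have "x \<in> lcoset y Qgrp" using xy lcoset_self[OF matrix_group_Qgrp, of x] by simp
  then obtain q where q: "q \<in> Qgrp" "x = y ** q" by (rule lcosetE)
  then have "ulblock (a ** x) = ulblock (a ** y) ** ulblock q" and H: "ulblock q \<in> Hgrp"
    by (simp_all add: matrix_mul_assoc ulblock_mult Qgrp_iff Pgrp_iff)
  then show ?thesis
    using y Hgrp_det_nz[OF H] by (simp add: det_mul lcoset_mult_right[OF matrix_group_Hgrp])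
qed

lemma continuous_map_phi_inv:
  fixes g :: "'m::finite matd"
  assumes g: "g \<in> SL"
  shows "continuous_map (subtopology Xdd (XP (span ((\<lambda>i. g *v axis (Inl i) 1) ` UNIV))))
    Xlow (phi_inv g)"
proof -
  have dg: "det g \<noteq> 0" using g by (simp add: SL_def)
  define B where "B h = ulblock (matrix_inv g ** h)" for h :: "'m matd"
  define U where "U = SL \<inter> {h. det (B h) \<noteq> 0}"
  have U: "openin (top_of_set SL) U"
    unfolding U_def B_def using open_ulblock_invertible by (rule openin_open_Int)
  have "subtopology (top_of_set SL) U = subtopology (top_of_set {h. det (B h) \<noteq> 0}) U"
    unfolding U_def by (simp add: subtopology_subtopology Int_ac)
  then have F: "continuous_map (subtopology (top_of_set SL) U) Xlow (\<lambda>h. lcoset (B h) Hgrp)"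
    unfolding B_def using continuous_map_from_subtopology[OF continuous_map_lcoset_ulblock]
    by simp
  have saturated: "x \<in> U \<and> lcoset (B x) Hgrp = lcoset (B y) Hgrp"
    if "x \<in> SL" "y \<in> U" "lcoset x Qgrp = lcoset y Qgrp" for x y
    using that ulblock_lcoset_Qgrp_invariant[OF that(3), of "matrix_inv g"]
    unfolding U_def B_def by auto
  have B_gp: "B (g ** p) = ulblock p" for p :: "'m matd"
    unfolding B_def by (simp add: matrix_mul_assoc matrix_inv_left[OF dg])
  have A: "(\<lambda>p. g ** p) ` (Pgrp :: 'm matd set) \<subseteq> U"
  proof clarify
    fix p :: "'m matd" assume p: "p \<in> Pgrp"
    then have "g ** p \<in> SL" using g by (simp add: SL_def Pgrp_iff det_mul)
    then show "g ** p \<in> U" using Pgrp_ulblock_det_nz[OF p] by (simp add: U_def B_gp)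
  qed
  have k: "phi_inv g (lcoset h Qgrp) = lcoset (B h) Hgrp"
    if "h \<in> (\<lambda>p. g ** p) ` (Pgrp :: 'm matd set)" for h
    using that dg by (auto simp: B_gp phi_inv_lcoset)
  have "continuous_map (subtopology Xdd ((\<lambda>h. lcoset h Qgrp) ` (\<lambda>p. g ** p) ` Pgrp))
      Xlow (phi_inv g)"
    unfolding Xdd_def
    by (rule continuous_map_quot_top_restrict[where f = "\<lambda>h. lcoset h Qgrp", OF U A F _ k])
      (use saturated in auto)
  moreover have "XP (span ((\<lambda>i. g *v axis (Inl i) 1) ` UNIV))
      = (\<lambda>h. lcoset h Qgrp) ` (\<lambda>p. g ** p) ` (Pgrp :: 'm matd set)"
    unfolding XP_eq_Pgrp_lcosets[OF g] by auto
  ultimately show ?thesis by simp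
qed

lemma phi_homeomorphic_map:
  fixes g :: "'m::finite matd"
  assumes g: "g \<in> SL"
  shows "homeomorphic_map Xlow (subtopology Xdd (XP (span ((\<lambda>i. g *v axis (Inl i) 1) ` UNIV))))
    (phi g)"
proof -
  let ?XP = "XP (span ((\<lambda>i. g *v axis (Inl i) 1) ` UNIV))"
  have dg: "det g \<noteq> 0" using g by (simp add: SL_def)
  have top: "topspace (subtopology Xdd ?XP) = ?XP"
    unfolding topspace_subtopology XP_def by auto
  have phi: "phi g c = lcoset (g ** blockdiag m) Qgrp" "blockdiag m \<in> Pgrp"
    if "c = lcoset m Hgrp" "m \<in> GLR" for c m
    using that by (simp_all add: phi_lcoset dg blockdiag_Pgrp)
  have "phi g c \<in> ?XP" if "c \<in> topspace Xlow" for c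
    using that phi unfolding topspace_Xlow XP_eq_Pgrp_lcosets[OF g] by blast
  then have "continuous_map Xlow (subtopology Xdd ?XP) (phi g)"
    using continuous_map_phi[OF g] by (simp add: continuous_map_into_subtopology)
  moreover have "phi_inv g (phi g c) = c" if "c \<in> topspace Xlow" for c
    using that phi unfolding topspace_Xlow
    by (auto simp: phi_inv_lcoset[OF dg] ulblock_blockdiag)
  moreover have "phi g (phi_inv g c) = c" if "c \<in> ?XP" for c
    using that unfolding XP_eq_Pgrp_lcosets[OF g]
    by (auto simp: phi_inv_lcoset[OF dg] phi_lcoset[OF dg] Pgrp_ulblock_det_nz
        lcoset_blockdiag_ulblock[OF dg])
  ultimately have "homeomorphic_maps Xlow (subtopology Xdd ?XP) (phi g) (phi_inv g)"
    unfolding homeomorphic_maps_def top using continuous_map_phi_inv[OF g] by blast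
  then show ?thesis by (auto simp: homeomorphic_map_maps)
qed

lemma measurable_borel_of_top:
  assumes "continuous_map X Y f"
  shows "f \<in> measurable (borel_of_top X) (borel_of_top Y)"
  unfolding borel_of_top_def
proof (rule measurable_measure_of)
  show "{U. openin Y U} \<subseteq> Pow (topspace Y)" using openin_subset by auto
  show "f \<in> space (sigma (topspace X) {U. openin X U}) \<rightarrow> topspace Y"
    using continuous_map_funspace[OF assms] by (simp add: space_measure_of_conv)
  fix U assume "U \<in> {U. openin Y U}"
  then have "openin X {x \<in> topspace X. f x \<in> U}"
    using openin_continuous_map_preimage[OF assms] by auto
  moreover have "f -` U \<inter> space (sigma (topspace X) {U. openin X U}) = {x \<in> topspace X. f x \<in> U}"
    by (auto simp: space_measure_of_conv)
  moreover have "{U. openin X U} \<subseteq> Pow (topspace X)" using openin_subset by auto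
  ultimately show "f -` U \<inter> space (sigma (topspace X) {U. openin X U})
      \<in> sets (sigma (topspace X) {U. openin X U})"
    by simp
qed

lemma continuous_map_lcoset_Xlow:
  fixes m0 :: "real^'n::finite^'n"
  assumes m0: "m0 \<in> GLR"
  shows "continuous_map Xlow Xlow (lcoset m0)"
  unfolding Xlow_def
proof (rule continuous_map_from_quot_top)
  have "continuous_on GLR (\<lambda>m :: real^'n^'n. m0 ** m)"
    unfolding matrix_matrix_mult_def by (intro continuous_intros)
  then have "continuous_map (top_of_set GLR) (top_of_set GLR) (\<lambda>m :: real^'n^'n. m0 ** m)"
    using m0 by (simp add: Pi_iff det_mul)
  then have "continuous_map (top_of_set GLR) (quot_top (top_of_set GLR) (\<lambda>m. lcoset m Hgrp))
      ((\<lambda>m. lcoset m Hgrp) \<circ> (\<lambda>m :: real^'n^'n. m0 ** m))"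
    using continuous_map_quot_top by (rule continuous_map_compose)
  then show "continuous_map (top_of_set GLR) (quot_top (top_of_set GLR) (\<lambda>m. lcoset m Hgrp))
      (\<lambda>m :: real^'n^'n. lcoset m0 (lcoset m Hgrp))"
    by (simp add: o_def lcoset_lcoset)
qed

lemma phi_mult_Pgrp:
  assumes g: "g \<in> SL" and p: "p \<in> Pgrp" and c: "c \<in> topspace Xlow"
  shows "phi (g ** p) c = phi g (lcoset (ulblock p) c)"
proof -
  have dg: "det g \<noteq> 0" and dp: "det p \<noteq> 0" and du: "det (ulblock p) \<noteq> 0"
    using g p by (simp_all add: SL_def Pgrp_iff Pgrp_ulblock_det_nz)
  obtain m where m: "m \<in> GLR" "c = lcoset m Hgrp" using c unfolding topspace_Xlow by auto
  have dum: "det (ulblock p ** m) \<noteq> 0" using du m(1) by (simp add: det_mul)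
  have X: "p ** blockdiag m \<in> Pgrp"
    using p blockdiag_Pgrp[of m] m(1) by (simp add: matrix_group_mult[OF matrix_group_Pgrp])
  have "ulblock (p ** blockdiag m) = ulblock p ** m"
    by (simp add: ulblock_mult[OF block_upper_blockdiag] ulblock_blockdiag)
  then have "lcoset (g ** (p ** blockdiag m)) Qgrp = lcoset (g ** blockdiag (ulblock p ** m)) Qgrp"
    using lcoset_Qgrp_eq_iff[OF dg X blockdiag_Pgrp[OF dum]] matrix_group_one[OF matrix_group_Hgrp]
    by (simp add: ulblock_blockdiag matrix_inv_left[OF dum])
  then show ?thesis
    unfolding m(2) lcoset_lcoset using dg dp m(1) dum
    by (simp add: phi_lcoset det_mul matrix_mul_assoc)
qed

lemma distr_phi_eq:
  fixes g g' :: "'m::finite matd" and \<mu> :: "'m mat1 set measure"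
  assumes g: "g \<in> SL" and g': "g' \<in> SL" and gg': "lcoset g Pgrp = lcoset g' Pgrp"
    and sets: "sets \<mu> = sets (borel_of_top Xlow)" and space: "space \<mu> = topspace Xlow"
    and invariant: "\<forall>h \<in> GLR. distr \<mu> \<mu> (lcoset h) = \<mu>"
  shows "distr \<mu> (borel_of_top Xdd) (phi g) = distr \<mu> (borel_of_top Xdd) (phi g')"
proof -
  have "g' \<in> lcoset g Pgrp" using gg' lcoset_self[OF matrix_group_Pgrp, of g'] by simp
  then obtain p where p: "p \<in> Pgrp" "g' = g ** p" by (rule lcosetE)
  have du: "det (ulblock p) \<noteq> 0" using p(1) by (rule Pgrp_ulblock_det_nz)
  have phi: "phi g \<in> measurable \<mu> (borel_of_top Xdd)"
    unfolding measurable_cong_sets[OF sets refl]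
    by (rule measurable_borel_of_top[OF continuous_map_phi[OF g]])
  have translate: "lcoset (ulblock p) \<in> measurable \<mu> \<mu>"
    unfolding measurable_cong_sets[OF sets sets]
    by (rule measurable_borel_of_top[OF continuous_map_lcoset_Xlow]) (simp add: du)
  have "distr \<mu> (borel_of_top Xdd) (phi g') = distr \<mu> (borel_of_top Xdd) (phi g \<circ> lcoset (ulblock p))"
    by (rule distr_cong) (simp_all add: p(2) space phi_mult_Pgrp[OF g p(1)])
  also have "\<dots> = distr (distr \<mu> \<mu> (lcoset (ulblock p))) (borel_of_top Xdd) (phi g)"
    by (rule distr_distr[symmetric, OF phi translate])
  also have "distr \<mu> \<mu> (lcoset (ulblock p)) = \<mu>" using invariant du by auto
  finally show ?thesis by simp
qed

theorem lemma2p1: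
  fixes g :: "'m::finite matd"
  assumes g: "g \<in> SL"
  defines "Hyp \<equiv> span ((\<lambda>i. g *v axis (Inl i) 1) ` (UNIV :: 'm set))"
  shows "XP Hyp = {lcoset (g ** p) Qgrp | p. p \<in> Pgrp}
    \<and> homeomorphic_map (Xlow :: 'm mat1 set topology) (subtopology Xdd (XP Hyp)) (phi g)
    \<and> (\<forall>(g' :: 'm matd) (\<mu> :: 'm mat1 set measure).
           g' \<in> SL \<longrightarrow> lcoset g Pgrp = lcoset g' Pgrp \<longrightarrow>
           prob_space \<mu> \<longrightarrow> sets \<mu> = sets (borel_of_top Xlow) \<longrightarrow>
           space \<mu> = topspace Xlow \<longrightarrow>
           (\<forall>h \<in> GLR. distr \<mu> \<mu> (\<lambda>c. lcoset h c) = \<mu>) \<longrightarrow>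
           distr \<mu> (borel_of_top Xdd) (phi g) = distr \<mu> (borel_of_top Xdd) (phi g'))"
  using XP_eq_Pgrp_lcosets[OF g] phi_homeomorphic_map[OF g] distr_phi_eq[OF g]
  unfolding Hyp_def by blast

end
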